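(* Let $(\mathbf{P},d_{\mathbf{P}})$ be a finite metric poset and $M,N,O$ be $\mathbf{P}$-modules. Let $(\mathbf{Q}_1,f_1\dashv g_1,h_1\dashv i_1,\Gamma_1)$ be a Galois coupling of $(M,N)$ and $(\mathbf{Q}_2,f_2\dashv g_2,h_2\dashv i_2,\Gamma_2)$ a Galois coupling of $(N,O)$. Let $\mathbf{R}=\{(q_1,q_2)\in\mathbf{Q}_1\times\mathbf{Q}_2\mid h_1(q_1)=f_2(q_2)\}$ with the product order and projections $\pi_1,\pi_2$, and suppose $(\mathbf{R},\ f_1\pi_1\dashv\iota_1g_1,\ h_2\pi_2\dashv\iota_2i_2,\ \Psi)$ is a Galois coupling of $(M,O)$, where $\iota_j:\mathbf{Q}_j\to\mathbf{R}$ are monotone maps right adjoint to $\pi_j$ with $\pi_j\iota_j=\mathrm{id}$ ($j=1,2$). Then \[ \mathrm{cost}(\Psi)\ \le\ \mathrm{cost}(\Gamma_1)+\mathrm{cost}(\Gamma_2). \]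
   Context: Fix a field $k$; $\mathrm{vect}$ is the category of finite-dimensional $k$-vector spaces. A finite poset is a category with a unique morphism $x\to y$ iff $x\le y$; a $\mathbf{P}$-module is a functor $\mathbf{P}\to\mathrm{vect}$. For a monotone map $g$, $g^*$ denotes precomposition with $g$. A Galois connection $f:\mathbf{Q}\rightleftarrows\mathbf{P}:g$ consists of monotone maps $f,g$ with $f(u)\le x\iff u\le g(x)$; it is a Galois insertion if also $f\circ g=\mathrm{id}_{\mathbf{P}}$. A Galois coupling of $(M,N)$ is $(\mathbf{Q},f\dashv g,h\dashv i,\Gamma)$ with $\mathbf{Q}$ a finite poset, $f:\mathbf{Q}\rightleftarrows\mathbf{P}:g$, $h:\mathbf{Q}\rightleftarrows\mathbf{P}:i$ Galois insertions and $\Gamma\in\mathrm{vect}^{\mathbf{Q}}$ with $g^*\Gamma\cong M$, $i^*\Gamma\cong N$. Its cost is $\mathrm{cost}(\Gamma)=\sup_{q\in\mathbf{Q}}d_{\mathbf{P}}(f(q),h(q))$ (computed with the two left adjoints of the coupling). *)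

theory Defs
  imports "Jordan_Normal_Form.Matrix"
begin

definition poset_on :: "'a set \<Rightarrow> ('a \<Rightarrow> 'a \<Rightarrow> bool) \<Rightarrow> bool" where
  "poset_on A lr \<longleftrightarrow>
     (\<forall>x\<in>A. lr x x) \<and>
     (\<forall>x\<in>A. \<forall>y\<in>A. lr x y \<and> lr y x \<longrightarrow> x = y) \<and>
     (\<forall>x\<in>A. \<forall>y\<in>A. \<forall>z\<in>A. lr x y \<and> lr y z \<longrightarrow> lr x z)"

definition finite_poset :: "'a set \<Rightarrow> ('a \<Rightarrow> 'a \<Rightarrow> bool) \<Rightarrow> bool" where
  "finite_poset A lr \<longleftrightarrow> finite A \<and> poset_on A lr"

definition metric_on :: "'a set \<Rightarrow> ('a \<Rightarrow> 'a \<Rightarrow> real) \<Rightarrow> bool" where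
  "metric_on A d \<longleftrightarrow>
     (\<forall>x\<in>A. \<forall>y\<in>A. 0 \<le> d x y \<and> (d x y = 0 \<longleftrightarrow> x = y) \<and> d x y = d y x) \<and>
     (\<forall>x\<in>A. \<forall>y\<in>A. \<forall>z\<in>A. d x z \<le> d x y + d y z)"

definition finite_metric_poset ::
  "'a set \<Rightarrow> ('a \<Rightarrow> 'a \<Rightarrow> bool) \<Rightarrow> ('a \<Rightarrow> 'a \<Rightarrow> real) \<Rightarrow> bool" where
  "finite_metric_poset A lr d \<longleftrightarrow> finite_poset A lr \<and> metric_on A d"

definition monotone_betw ::
  "'a set \<Rightarrow> ('a \<Rightarrow> 'a \<Rightarrow> bool) \<Rightarrow> 'b set \<Rightarrow> ('b \<Rightarrow> 'b \<Rightarrow> bool) \<Rightarrow> ('a \<Rightarrow> 'b) \<Rightarrow> bool" where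
  "monotone_betw A leA B leB f \<longleftrightarrow>
     f ` A \<subseteq> B \<and> (\<forall>x\<in>A. \<forall>y\<in>A. leA x y \<longrightarrow> leB (f x) (f y))"

definition galois_conn ::
  "'q set \<Rightarrow> ('q \<Rightarrow> 'q \<Rightarrow> bool) \<Rightarrow> 'p set \<Rightarrow> ('p \<Rightarrow> 'p \<Rightarrow> bool)
     \<Rightarrow> ('q \<Rightarrow> 'p) \<Rightarrow> ('p \<Rightarrow> 'q) \<Rightarrow> bool" where
  "galois_conn Q leQ P leP f g \<longleftrightarrow>
     monotone_betw Q leQ P leP f \<and> monotone_betw P leP Q leQ g \<and>
     (\<forall>u\<in>Q. \<forall>x\<in>P. leP (f u) x \<longleftrightarrow> leQ u (g x))"

definition galois_ins ::
  "'q set \<Rightarrow> ('q \<Rightarrow> 'q \<Rightarrow> bool) \<Rightarrow> 'p set \<Rightarrow> ('p \<Rightarrow> 'p \<Rightarrow> bool)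
     \<Rightarrow> ('q \<Rightarrow> 'p) \<Rightarrow> ('p \<Rightarrow> 'q) \<Rightarrow> bool" where
  "galois_ins Q leQ P leP f g \<longleftrightarrow>
     galois_conn Q leQ P leP f g \<and> (\<forall>x\<in>P. f (g x) = x)"

(* A P-module (functor P -> vect), presented up to equivalence of vect with the
   category of matrices over k: a dimension for each point and, for x \<le> y,
   a (dim y) x (dim x) matrix; functoriality on the carrier. *)
type_synonym ('p, 'k) pmod = "('p \<Rightarrow> nat) \<times> ('p \<Rightarrow> 'p \<Rightarrow> 'k mat)"

definition is_module :: "'p set \<Rightarrow> ('p \<Rightarrow> 'p \<Rightarrow> bool) \<Rightarrow> ('p, 'k::field) pmod \<Rightarrow> bool" where
  "is_module P lr M \<longleftrightarrow>
     (\<forall>x\<in>P. snd M x x = 1\<^sub>m (fst M x)) \<and>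
     (\<forall>x\<in>P. \<forall>y\<in>P. lr x y \<longrightarrow> snd M x y \<in> carrier_mat (fst M y) (fst M x)) \<and>
     (\<forall>x\<in>P. \<forall>y\<in>P. \<forall>z\<in>P. lr x y \<and> lr y z \<longrightarrow> snd M x z = snd M y z * snd M x y)"

definition pullback :: "('p \<Rightarrow> 'q) \<Rightarrow> ('q, 'k) pmod \<Rightarrow> ('p, 'k) pmod" where
  "pullback g G = (\<lambda>x. fst G (g x), \<lambda>x y. snd G (g x) (g y))"

definition module_iso ::
  "'p set \<Rightarrow> ('p \<Rightarrow> 'p \<Rightarrow> bool) \<Rightarrow> ('p, 'k::field) pmod \<Rightarrow> ('p, 'k) pmod \<Rightarrow> bool" where
  "module_iso P lr M N \<longleftrightarrow>
     (\<exists>\<phi>. (\<forall>x\<in>P. \<phi> x \<in> carrier_mat (fst N x) (fst M x) \<and> invertible_mat (\<phi> x)) \<and>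
          (\<forall>x\<in>P. \<forall>y\<in>P. lr x y \<longrightarrow> \<phi> y * snd M x y = snd N x y * \<phi> x))"

definition galois_coupling ::
  "'p set \<Rightarrow> ('p \<Rightarrow> 'p \<Rightarrow> bool) \<Rightarrow> 'q set \<Rightarrow> ('q \<Rightarrow> 'q \<Rightarrow> bool)
    \<Rightarrow> ('q \<Rightarrow> 'p) \<Rightarrow> ('p \<Rightarrow> 'q) \<Rightarrow> ('q \<Rightarrow> 'p) \<Rightarrow> ('p \<Rightarrow> 'q)
    \<Rightarrow> ('q, 'k::field) pmod \<Rightarrow> ('p, 'k) pmod \<Rightarrow> ('p, 'k) pmod \<Rightarrow> bool" where
  "galois_coupling P leP Q leQ f g h i \<Gamma> M N \<longleftrightarrow>
     finite_poset Q leQ \<and>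
     galois_ins Q leQ P leP f g \<and> galois_ins Q leQ P leP h i \<and>
     is_module Q leQ \<Gamma> \<and>
     module_iso P leP (pullback g \<Gamma>) M \<and> module_iso P leP (pullback i \<Gamma>) N"

(* cost = sup_{q in Q} d(f q, h q); the 0 only matters for empty Q (sup of an
   empty set of nonnegative reals taken as 0) *)
definition cost :: "('p \<Rightarrow> 'p \<Rightarrow> real) \<Rightarrow> 'q set \<Rightarrow> ('q \<Rightarrow> 'p) \<Rightarrow> ('q \<Rightarrow> 'p) \<Rightarrow> real" where
  "cost d Q f h = Max (insert 0 ((\<lambda>q. d (f q) (h q)) ` Q))"

definition prod_le :: "('a \<Rightarrow> 'a \<Rightarrow> bool) \<Rightarrow> ('b \<Rightarrow> 'b \<Rightarrow> bool) \<Rightarrow> 'a \<times> 'b \<Rightarrow> 'a \<times> 'b \<Rightarrow> bool" where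
  "prod_le le1 le2 u v \<longleftrightarrow> le1 (fst u) (fst v) \<and> le2 (snd u) (snd v)"

end

theory Submission
  imports Defs
begin

(* Every point (q1, q2) of the fibre product has h1 q1 = f2 q2, so the triangle inequality
   through that common point bounds d (f1 q1) (h2 q2) by the two costs. *)

lemma cost_nonneg:
  assumes "finite Q"
  shows "0 \<le> cost d Q f h"
  unfolding cost_def using assms by (intro Max_ge) auto

lemma cost_ge:
  assumes "finite Q" and "q \<in> Q"
  shows "d (f q) (h q) \<le> cost d Q f h"
  unfolding cost_def using assms by (intro Max_ge) auto

lemma cost_le:
  assumes "finite Q" and "0 \<le> c" and "\<And>q. q \<in> Q \<Longrightarrow> d (f q) (h q) \<le> c"
  shows "cost d Q f h \<le> c"
  unfolding cost_def using assms by (intro Max.boundedI) auto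

lemma galois_coupling_finite:
  "galois_coupling P leP Q leQ f g h i \<Gamma> M N \<Longrightarrow> finite Q"
  by (simp add: galois_coupling_def finite_poset_def)

lemma galois_coupling_left_adjoints_into:
  assumes "galois_coupling P leP Q leQ f g h i \<Gamma> M N" and "q \<in> Q"
  shows "f q \<in> P" and "h q \<in> P"
  using assms
  by (auto simp: galois_coupling_def galois_ins_def galois_conn_def monotone_betw_def)

lemma cost_fibre_product_le:
  assumes "metric_on P d" and "finite Q1" and "finite Q2"
    and "f1 ` Q1 \<subseteq> P" and "h1 ` Q1 \<subseteq> P" and "h2 ` Q2 \<subseteq> P"
  shows "cost d {(q1, q2). q1 \<in> Q1 \<and> q2 \<in> Q2 \<and> h1 q1 = f2 q2} (f1 \<circ> fst) (h2 \<circ> snd)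
           \<le> cost d Q1 f1 h1 + cost d Q2 f2 h2"
proof (rule cost_le)
  show "finite {(q1, q2). q1 \<in> Q1 \<and> q2 \<in> Q2 \<and> h1 q1 = f2 q2}"
    using assms(2,3) by (rule finite_subset[OF _ finite_cartesian_product, rotated 1]) auto
  show "0 \<le> cost d Q1 f1 h1 + cost d Q2 f2 h2"
    using assms(2,3) by (simp add: add_nonneg_nonneg cost_nonneg)
next
  fix q assume "q \<in> {(q1, q2). q1 \<in> Q1 \<and> q2 \<in> Q2 \<and> h1 q1 = f2 q2}"
  then obtain q1 q2 where q: "q = (q1, q2)" "q1 \<in> Q1" "q2 \<in> Q2" "h1 q1 = f2 q2" by blast
  have "d (f1 q1) (h2 q2) \<le> d (f1 q1) (h1 q1) + d (h1 q1) (h2 q2)"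
    using assms(1,4-6) q unfolding metric_on_def by blast
  also have "\<dots> \<le> cost d Q1 f1 h1 + cost d Q2 f2 h2"
    using cost_ge[OF assms(2) q(2), of d f1 h1] cost_ge[OF assms(3) q(3), of d f2 h2] q(4)
    by simp
  finally show "d ((f1 \<circ> fst) q) ((h2 \<circ> snd) q) \<le> cost d Q1 f1 h1 + cost d Q2 f2 h2"
    using q(1) by simp
qed

theorem lemma3p5:
  fixes P :: "'p set" and leP :: "'p \<Rightarrow> 'p \<Rightarrow> bool" and d :: "'p \<Rightarrow> 'p \<Rightarrow> real"
    and M N L :: "('p, 'k::field) pmod"
    and Q1 :: "'q1 set" and le1 :: "'q1 \<Rightarrow> 'q1 \<Rightarrow> bool"
    and f1 h1 :: "'q1 \<Rightarrow> 'p" and g1 i1 :: "'p \<Rightarrow> 'q1" and \<Gamma>1 :: "('q1, 'k) pmod"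
    and Q2 :: "'q2 set" and le2 :: "'q2 \<Rightarrow> 'q2 \<Rightarrow> bool"
    and f2 h2 :: "'q2 \<Rightarrow> 'p" and g2 i2 :: "'p \<Rightarrow> 'q2" and \<Gamma>2 :: "('q2, 'k) pmod"
    and \<iota>1 :: "'q1 \<Rightarrow> 'q1 \<times> 'q2" and \<iota>2 :: "'q2 \<Rightarrow> 'q1 \<times> 'q2"
    and \<Psi> :: "('q1 \<times> 'q2, 'k) pmod"
  defines "R \<equiv> {(q1, q2). q1 \<in> Q1 \<and> q2 \<in> Q2 \<and> h1 q1 = f2 q2}"
      and "leR \<equiv> prod_le le1 le2"
  assumes "finite_metric_poset P leP d"
    and "is_module P leP M" and "is_module P leP N" and "is_module P leP L"
    and "galois_coupling P leP Q1 le1 f1 g1 h1 i1 \<Gamma>1 M N"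
    and "galois_coupling P leP Q2 le2 f2 g2 h2 i2 \<Gamma>2 N L"
    and "galois_conn R leR Q1 le1 fst \<iota>1" and "\<forall>q\<in>Q1. fst (\<iota>1 q) = q"
    and "galois_conn R leR Q2 le2 snd \<iota>2" and "\<forall>q\<in>Q2. snd (\<iota>2 q) = q"
    and "galois_coupling P leP R leR (f1 \<circ> fst) (\<iota>1 \<circ> g1) (h2 \<circ> snd) (\<iota>2 \<circ> i2) \<Psi> M L"
  shows "cost d R (f1 \<circ> fst) (h2 \<circ> snd) \<le> cost d Q1 f1 h1 + cost d Q2 f2 h2"
proof -
  note \<Gamma>1 = assms(7) and \<Gamma>2 = assms(8)
  have "metric_on P d"
    using assms(3) by (simp add: finite_metric_poset_def)
  moreover have "f1 ` Q1 \<subseteq> P" "h1 ` Q1 \<subseteq> P" "h2 ` Q2 \<subseteq> P"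
    using galois_coupling_left_adjoints_into[OF \<Gamma>1] galois_coupling_left_adjoints_into[OF \<Gamma>2]
    by auto
  ultimately show ?thesis
    unfolding R_def
    by (intro cost_fibre_product_le galois_coupling_finite[OF \<Gamma>1] galois_coupling_finite[OF \<Gamma>2])
qed

end
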